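(* Let $\Gamma\subseteq\mathbb{B}_n$ be an embedded submanifold, $a\in C_0^\infty(\Gamma)$ positive, $p\in(0,1)$, $\epsilon>0$, and $\mathcal V=\{z\in\mathbb{B}_n:\ \exists w\in\Gamma,\ \beta(z,w)<\epsilon\}$. Then, as $\alpha\to\infty$, $$c_\alpha^{1+p}\int_{\mathbb{B}_n\setminus\mathcal V}\left[\int_\Gamma\Big(\frac{(1-|z|^2)(1-|w|^2)}{|1-\langle z,w\rangle|^2}\Big)^{n+1+\alpha}\frac{a(w)\,d\sigma(w)}{(1-|w|^2)^{n+1}}\right]^p d\tau(z)=O(\alpha^{-N})\quad\text{for every }N>0.$$
   Context: $\mathbb{B}_n=\{z\in\mathbb{C}^n:|z|<1\}$, $\langle z,w\rangle=\sum_jz_j\overline{w_j}$, $dv$ normalized Lebesgue measure, $d\tau(z)=\frac{dv(z)}{(1-|z|^2)^{n+1}}$ the invariant measure, $c_\alpha=\frac{\Gamma(\alpha+n+1)}{n!\,\Gamma(\alpha+1)}$. The hyperbolic (Bergman) distance is $\beta(z,w)=\tanh^{-1}|\varphi_z(w)|$, where $\varphi_z$ is the involutive automorphism of $\mathbb{B}_n$ exchanging $z$ and $0$, so that $1-|\varphi_z(w)|^2=\frac{(1-|z|^2)(1-|w|^2)}{|1-\langle z,w\rangle|^2}$. $\Gamma$ carries the Riemannian metric induced from the Bergman metric of $\mathbb{B}_n$ (Hermitian metric $b_{jk}(p)=\frac{1}{n+1}\partial_{z_j}\partial_{\bar z_k}\log(1-|z|^2)^{-(n+1)}|_{z=p}$),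 and $\sigma$ is its Riemannian volume measure. *)

theory Defs
  imports "HOL-Analysis.Analysis"
begin

text \<open>C^0 = continuous; C^(k+1) = differentiable with every directional derivative
  x |-> Df(x) v of class C^k.  (On open sets of finite-dimensional spaces this is the
  usual C^(k+1).)\<close>
fun Ck_on :: "nat \<Rightarrow> ('a::euclidean_space \<Rightarrow> 'b::real_normed_vector) \<Rightarrow> 'a set \<Rightarrow> bool" where
  "Ck_on 0 f S = continuous_on S f"
| "Ck_on (Suc k) f S =
     (f differentiable_on S \<and> (\<forall>v. Ck_on k (\<lambda>x. frechet_derivative f (at x) v) S))"

definition smooth_on :: "('a::euclidean_space \<Rightarrow> 'b::real_normed_vector) \<Rightarrow> 'a set \<Rightarrow> bool" where
  "smooth_on f S \<longleftrightarrow> (\<forall>k. Ck_on k f S)"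

text \<open>C^n is modelled as \<open>complex^'n\<close>, n = CARD('n).\<close>

definition cinner :: "complex^'n \<Rightarrow> complex^'n \<Rightarrow> complex" where
  "cinner z w = (\<Sum>j\<in>UNIV. z $ j * cnj (w $ j))"

definition unit_ball :: "(complex^'n) set" where
  "unit_ball = ball 0 1"

text \<open>Involutive automorphism phi_z exchanging z and 0 (Rudin):
  phi_z(w) = (z - P_z w - s_z Q_z w) / (1 - <w,z>), s_z = sqrt(1-|z|^2),
  P_z w = (<w,z>/<z,z>) z, Q_z = I - P_z  (P_0 = 0).\<close>
definition proj_z :: "complex^'n \<Rightarrow> complex^'n \<Rightarrow> complex^'n" where
  "proj_z z w = (if z = 0 then 0 else (\<chi> j. (cinner w z / cinner z z) * z $ j))"

definition phi_aut :: "complex^'n \<Rightarrow> complex^'n \<Rightarrow> complex^'n" where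
  "phi_aut z w =
     (\<chi> j. (z $ j - proj_z z w $ j
              - complex_of_real (sqrt (1 - (norm z)\<^sup>2)) * (w $ j - proj_z z w $ j))
            / (1 - cinner w z))"

definition hyp_dist :: "complex^'n \<Rightarrow> complex^'n \<Rightarrow> real" where
  "hyp_dist z w = artanh (norm (phi_aut z w))"

definition ball_vol :: "(complex^'n) measure" where
  "ball_vol = density lborel
     (\<lambda>z. ennreal (indicator unit_ball z / measure lborel (unit_ball :: (complex^'n) set)))"

definition tau_measure :: "(complex^'n) measure" where
  "tau_measure = density lborel
     (\<lambda>z. ennreal (indicator unit_ball z /
        (measure lborel (unit_ball :: (complex^'n) set) * (1 - (norm z)\<^sup>2) ^ (CARD('n) + 1))))"

definition c_alpha :: "'n itself \<Rightarrow> real \<Rightarrow> real" where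
  "c_alpha _ \<alpha> = Gamma (\<alpha> + real CARD('n) + 1) / (fact CARD('n) * Gamma (\<alpha> + 1))"

text \<open>Hermitian Bergman metric b_jk(p) = (1/(n+1)) d_j dbar_k log (1-|z|^2)^(-(n+1)) at p,
  computed explicitly: b_jk(p) = delta_jk/(1-|p|^2) + conj(p_j) p_k/(1-|p|^2)^2.
  The induced Riemannian metric is g_p(u,v) = Re sum_jk b_jk(p) u_j conj(v_k).\<close>
definition bergman_b :: "complex^'n \<Rightarrow> 'n \<Rightarrow> 'n \<Rightarrow> complex" where
  "bergman_b p j k = (if j = k then 1 / (1 - (norm p)\<^sup>2) else 0)
                     + cnj (p $ j) * p $ k / (1 - (norm p)\<^sup>2)\<^sup>2"

definition bergman_g :: "complex^'n \<Rightarrow> complex^'n \<Rightarrow> complex^'n \<Rightarrow> real" where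
  "bergman_g p u v = Re (\<Sum>j\<in>UNIV. \<Sum>k\<in>UNIV. bergman_b p j k * u $ j * cnj (v $ k))"

definition is_chart :: "(complex^'n) set \<Rightarrow> (real^'m) set \<Rightarrow> (real^'m \<Rightarrow> complex^'n) \<Rightarrow> bool" where
  "is_chart \<Gamma> U \<psi> \<longleftrightarrow>
     open U \<and> smooth_on \<psi> U \<and>
     (\<forall>u\<in>U. inj (frechet_derivative \<psi> (at u))) \<and>
     \<psi> ` U \<subseteq> \<Gamma> \<and> openin (top_of_set \<Gamma>) (\<psi> ` U) \<and>
     (\<exists>g. homeomorphism U (\<psi> ` U) \<psi> g)"

definition embedded_submanifold :: "'m::finite itself \<Rightarrow> (complex^'n) set \<Rightarrow> bool" where
  "embedded_submanifold _ \<Gamma> \<longleftrightarrow> \<Gamma> \<subseteq> unit_ball \<and>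
     (\<forall>p\<in>\<Gamma>. \<exists>U (\<psi> :: real^'m \<Rightarrow> complex^'n). is_chart \<Gamma> U \<psi> \<and> p \<in> \<psi> ` U)"

text \<open>Riemannian volume measure of Gamma for the metric induced by the Bergman metric:
  in every chart, d sigma = sqrt(det Gram(u)) du.  (This determines sigma uniquely.)\<close>
definition riemannian_volume :: "'m::finite itself \<Rightarrow> (complex^'n) set \<Rightarrow> (complex^'n) measure \<Rightarrow> bool" where
  "riemannian_volume _ \<Gamma> \<sigma> \<longleftrightarrow>
     sets \<sigma> = sets borel \<and> emeasure \<sigma> (UNIV - \<Gamma>) = 0 \<and>
     (\<forall>U (\<psi> :: real^'m \<Rightarrow> complex^'n). is_chart \<Gamma> U \<psi> \<longrightarrow>
        (\<forall>A\<in>sets borel. A \<subseteq> \<psi> ` U \<longrightarrow>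
           emeasure \<sigma> A =
             (\<integral>\<^sup>+ u\<in>(U \<inter> \<psi> -` A).
                ennreal (sqrt (det (\<chi> i j. bergman_g (\<psi> u)
                   (frechet_derivative \<psi> (at u) (axis i 1))
                   (frechet_derivative \<psi> (at u) (axis j 1))))) \<partial>lborel)))"

definition smooth_compact_support :: "'m::finite itself \<Rightarrow> (complex^'n) set \<Rightarrow> (complex^'n \<Rightarrow> real) \<Rightarrow> bool" where
  "smooth_compact_support _ \<Gamma> a \<longleftrightarrow>
     (\<forall>U (\<psi> :: real^'m \<Rightarrow> complex^'n). is_chart \<Gamma> U \<psi> \<longrightarrow> smooth_on (a \<circ> \<psi>) U) \<and>
     (\<exists>K. compact K \<and> K \<subseteq> \<Gamma> \<and> (\<forall>w\<in>\<Gamma> - K. a w = 0))"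

end

theory Submission
  imports Defs "HOL-Real_Asymp.Real_Asymp"
begin

text \<open>For \<open>z\<close> outside the \<open>\<epsilon>\<close>-neighbourhood \<open>V\<close> every \<open>w \<in> \<Gamma>\<close> satisfies
  \<open>|\<phi>\<^sub>z(w)| \<ge> tanh \<epsilon>\<close>, so the base \<open>1 - |\<phi>\<^sub>z(w)|\<^sup>2\<close> of the kernel is at most
  \<open>\<delta> = 1 - tanh\<^sup>2 \<epsilon> < 1\<close>. On the support of \<open>a\<close>, which lies in a ball of radius \<open>r < 1\<close>,
  the base is also at most \<open>(1 - |z|\<^sup>2) / (1 - r)\<^sup>2\<close>. Spending \<open>(n + 1) / p\<close> of the exponent
  \<open>n + 1 + \<alpha>\<close> on the second bound and the rest on the first gives
  \<open>I(z)\<^sup>p \<le> C \<delta>\<^bsup>p\<alpha>\<^esup> (1 - |z|\<^sup>2)\<^bsup>n+1\<^esup>\<close>, and \<open>(1 - |z|\<^sup>2)\<^bsup>n+1\<^esup> d\<tau>\<close> is the normalized volume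
  of the ball. So the outer integral decays geometrically in \<open>\<alpha>\<close>, which beats the polynomial
  growth \<open>c\<^sub>\<alpha> \<le> (\<alpha> + n)\<^sup>n\<close>. Only \<open>\<Gamma> \<subseteq> unit_ball\<close>, the compact support of \<open>a\<close> and
  the Borel measurability of \<open>\<sigma>\<close> are used.\<close>

section \<open>The automorphism \<open>phi_aut\<close> and the invariant kernel\<close>

definition invariant_kernel :: "complex^'n \<Rightarrow> complex^'n \<Rightarrow> real" where
  "invariant_kernel z w = (1 - (norm z)\<^sup>2) * (1 - (norm w)\<^sup>2) / (cmod (1 - cinner z w))\<^sup>2"

lemma norm_vec_complex_power2: "(norm (x::complex^'n))\<^sup>2 = (\<Sum>j\<in>UNIV. (cmod (x$j))\<^sup>2)"
  unfolding norm_vec_def L2_set_def by (simp add: sum_nonneg)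

lemma cinner_self: "cinner z z = of_real ((norm z)\<^sup>2)"
  unfolding cinner_def norm_vec_complex_power2 of_real_sum
  by (rule sum.cong[OF refl]) (metis complex_norm_square of_real_power)

lemma cinner_commute: "cinner z w = cnj (cinner w z)"
  unfolding cinner_def by (simp add: mult.commute)

lemma norm_cinner_le: "cmod (cinner z w) \<le> norm z * norm (w::complex^'n)"
proof -
  have "cmod (cinner z w) \<le> (\<Sum>j\<in>UNIV. \<bar>cmod (z$j)\<bar> * \<bar>cmod (w$j)\<bar>)"
    unfolding cinner_def by (rule order_trans[OF norm_sum]) (simp add: norm_mult)
  also have "\<dots> \<le> norm z * norm w" unfolding norm_vec_def by (rule L2_set_mult_ineq)
  finally show ?thesis .
qed

lemma norm_one_minus_cinner_ge: "1 - norm z * norm w \<le> cmod (1 - cinner z (w::complex^'n))"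
  using norm_cinner_le[of z w] norm_triangle_ineq2[of 1 "cinner z w"] by simp

lemma norm_one_minus_cinner_le: "cmod (1 - cinner z w) \<le> 1 + norm z * norm (w::complex^'n)"
  using norm_cinner_le[of z w] norm_triangle_ineq4[of 1 "cinner z w"] by simp

lemma norm_lincomb_power2:
  fixes z w :: "complex^'n"
  shows "(norm (\<chi> j. A * z$j + B * w$j))\<^sup>2 =
    (cmod A)\<^sup>2 * (norm z)\<^sup>2 + 2 * Re (A * cnj B * cinner z w) + (cmod B)\<^sup>2 * (norm w)\<^sup>2"
proof -
  have "(norm (\<chi> j. A * z$j + B * w$j))\<^sup>2 = Re (\<Sum>j\<in>UNIV. (A * z$j + B * w$j) * cnj (A * z$j + B * w$j))"
    unfolding norm_vec_complex_power2 Re_sum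
    by (simp only: vec_lambda_beta complex_mult_cnj cmod_power2 Re_complex_of_real)
  also have "\<dots> = Re (A * cnj A * cinner z z + A * cnj B * cinner z w
      + cnj (A * cnj B * cinner z w) + B * cnj B * cinner w w)"
    unfolding cinner_def by (simp add: sum.distrib sum_distrib_left algebra_simps)
  finally show ?thesis
    by (simp add: cinner_self complex_mult_cnj cmod_power2 algebra_simps)
qed

text \<open>For \<open>z = 0\<close> the quotient by \<open>(norm z)\<^sup>2 = 0\<close> in \<open>A\<close> is a junk value, which is
  harmless because it multiplies \<open>z $ j = 0\<close>.\<close>
lemma phi_aut_component:
  fixes z w :: "complex^'n"
  defines "s \<equiv> sqrt (1 - (norm z)\<^sup>2)"
  defines "A \<equiv> 1 - of_real (1 - s) * (cinner w z / of_real ((norm z)\<^sup>2))"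
  shows "phi_aut z w $ j = (A * z$j + of_real (- s) * w$j) / (1 - cinner w z)"
  unfolding phi_aut_def A_def s_def proj_z_def cinner_self by (simp add: algebra_simps)

lemma phi_aut_numerator_identity:
  fixes c :: complex and s t :: real
  assumes "s\<^sup>2 = 1 - t" and "t = 0 \<Longrightarrow> c = 0"
  defines "A \<equiv> 1 - of_real (1 - s) * (c / of_real t)"
  shows "(cmod A)\<^sup>2 * t - 2 * s * Re (A * cnj c) = t - 2 * Re c + (cmod c)\<^sup>2"
proof (cases "t = 0")
  case False
  obtain x y where c: "c = Complex x y" by (metis complex.exhaust)
  have A: "A = Complex (1 - (1 - s) * x / t) (- (1 - s) * y / t)"
    unfolding A_def c using False by (simp add: complex_eq_iff field_simps)
  show ?thesis using False assms(1) unfolding A c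
    by (simp add: cmod_power2) (simp add: field_simps power2_eq_square, algebra)
qed (use assms in simp)

lemma one_minus_norm_phi_aut_power2:
  fixes z w :: "complex^'n"
  assumes z: "norm z < 1" and w: "norm w < 1"
  shows "1 - (norm (phi_aut z w))\<^sup>2 = invariant_kernel z w"
proof -
  define t where "t = (norm z)\<^sup>2"
  define s where "s = sqrt (1 - t)"
  define c where "c = cinner w z"
  define A where "A = 1 - of_real (1 - s) * (c / of_real t)"
  have t: "0 \<le> t" "t < 1" unfolding t_def using z by (simp_all add: abs_square_less_1)
  have s2: "s\<^sup>2 = 1 - t" unfolding s_def using t by simp
  have "cmod c < 1"
    using norm_cinner_le[of w z] mult_right_mono[of "norm w" 1 "norm z"] z w unfolding c_def by simp
  then have c1: "0 < cmod (1 - c)" by auto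
  have denom: "cmod (1 - cinner z w) = cmod (1 - c)"
    unfolding c_def by (metis cinner_commute complex_cnj_diff complex_cnj_one complex_mod_cnj)
  have phi: "phi_aut z w $ j = (A * z$j + of_real (- s) * w$j) / (1 - c)" for j
    unfolding A_def s_def t_def c_def by (rule phi_aut_component)
  have "(norm (phi_aut z w))\<^sup>2 = (norm (\<chi> j. A * z$j + of_real (- s) * w$j))\<^sup>2 / (cmod (1 - c))\<^sup>2"
    unfolding norm_vec_complex_power2 phi
    by (simp add: norm_divide power_divide sum_divide_distrib)
  also have "\<dots> = (t - 2 * Re c + (cmod c)\<^sup>2 + (1 - t) * (norm w)\<^sup>2) / (cmod (1 - c))\<^sup>2"
  proof -
    have "t = 0 \<Longrightarrow> c = 0" unfolding t_def c_def cinner_def by simp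
    then have "(cmod A)\<^sup>2 * t - 2 * s * Re (A * cnj c) = t - 2 * Re c + (cmod c)\<^sup>2"
      unfolding A_def by (rule phi_aut_numerator_identity[OF s2])
    moreover have "Re (A * cnj (of_real (- s)) * cnj c) = - s * Re (A * cnj c)"
      by (simp add: algebra_simps)
    ultimately show ?thesis
      unfolding norm_lincomb_power2 cinner_commute[of z w, folded c_def] t_def[symmetric]
      by (simp add: s2 algebra_simps)
  qed
  finally have "1 - (norm (phi_aut z w))\<^sup>2
      = ((cmod (1 - c))\<^sup>2 - (t - 2 * Re c + (cmod c)\<^sup>2 + (1 - t) * (norm w)\<^sup>2)) / (cmod (1 - c))\<^sup>2"
    using c1 by (simp add: diff_divide_distrib)
  also have "(cmod (1 - c))\<^sup>2 - (t - 2 * Re c + (cmod c)\<^sup>2 + (1 - t) * (norm w)\<^sup>2)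
      = (1 - t) * (1 - (norm w)\<^sup>2)"
    by (simp add: cmod_power2) (simp add: power2_eq_square algebra_simps)
  finally show ?thesis unfolding invariant_kernel_def denom t_def .
qed

section \<open>Bounds for the invariant kernel\<close>

lemma tanh_artanh_real:
  fixes x :: real
  assumes "\<bar>x\<bar> < 1"
  shows "tanh (artanh x) = x"
proof -
  have pos: "0 < 1 + x" "0 < 1 - x" using assms by auto
  have "- 2 * artanh x = ln ((1 - x) / (1 + x))"
    using pos by (simp add: artanh_def ln_div)
  then have e: "exp (- 2 * artanh x) = (1 - x) / (1 + x)"
    using pos by simp
  show ?thesis using pos unfolding tanh_real_altdef e by (simp add: field_simps)
qed

lemma invariant_kernel_pos:
  fixes z w :: "complex^'n"
  assumes "norm z < 1" "norm w < 1"
  shows "0 < invariant_kernel z w"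
proof -
  have "norm z * norm w < 1"
    using assms mult_right_mono[of "norm z" 1 "norm w"] by simp
  then have "0 < cmod (1 - cinner z w)" using norm_one_minus_cinner_ge[of z w] by linarith
  then show ?thesis
    using assms unfolding invariant_kernel_def by (simp add: abs_square_less_1)
qed

lemma invariant_kernel_le_of_norm_le:
  fixes z w :: "complex^'n"
  assumes "norm z \<le> 1" "norm w \<le> r" "r < 1"
  shows "invariant_kernel z w \<le> (1 - (norm z)\<^sup>2) / (1 - r)\<^sup>2"
proof -
  have "norm z * norm w \<le> r" using assms mult_mono[of "norm z" 1 "norm w" r] by simp
  then have "(1 - r)\<^sup>2 \<le> (cmod (1 - cinner z w))\<^sup>2"
    using norm_one_minus_cinner_ge[of z w] assms by (intro power_mono) auto
  moreover have "0 \<le> 1 - (norm z)\<^sup>2" using assms by (simp add: abs_square_le_1)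
  ultimately show ?thesis
    using assms unfolding invariant_kernel_def
    by (intro frac_le mult_left_le) (auto simp: zero_less_power2)
qed

lemma invariant_kernel_ge_of_norm_le:
  fixes z w :: "complex^'n"
  assumes "norm z \<le> 1" "norm w \<le> r" "r < 1"
  shows "(1 - (norm z)\<^sup>2) * (1 - r\<^sup>2) / 4 \<le> invariant_kernel z w"
proof -
  have "norm z * norm w \<le> r" using assms mult_mono[of "norm z" 1 "norm w" r] by simp
  then have "0 < cmod (1 - cinner z w)" using norm_one_minus_cinner_ge[of z w] assms by linarith
  moreover have "(cmod (1 - cinner z w))\<^sup>2 \<le> 2\<^sup>2"
    using norm_one_minus_cinner_le[of z w] assms mult_mono[of "norm z" 1 "norm w" 1]
    by (intro power_mono) auto
  moreover have "1 - r\<^sup>2 \<le> 1 - (norm w)\<^sup>2" using assms by (simp add: power_mono)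
  moreover have "0 \<le> 1 - (norm z)\<^sup>2" using assms by (simp add: abs_square_le_1)
  moreover have "0 \<le> 1 - r\<^sup>2"
    using assms order_trans[OF norm_ge_zero assms(2)] by (simp add: abs_square_le_1)
  ultimately show ?thesis unfolding invariant_kernel_def
    by (intro frac_le mult_left_mono mult_nonneg_nonneg) auto
qed

lemma invariant_kernel_le_of_hyp_dist:
  fixes z w :: "complex^'n"
  assumes "norm z < 1" "norm w < 1" "0 \<le> \<epsilon>" "\<epsilon> \<le> hyp_dist z w"
  shows "invariant_kernel z w \<le> 1 - (tanh \<epsilon>)\<^sup>2"
proof -
  define y where "y = norm (phi_aut z w)"
  have k: "invariant_kernel z w = 1 - y\<^sup>2"
    unfolding y_def using one_minus_norm_phi_aut_power2[OF assms(1,2)] by simp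
  then have "y < 1" using invariant_kernel_pos[OF assms(1,2)] unfolding y_def
    by (simp add: abs_square_less_1)
  have "tanh \<epsilon> \<le> y"
  proof (rule ccontr)
    assume "\<not> tanh \<epsilon> \<le> y"
    then have "tanh (artanh y) < tanh \<epsilon>" using tanh_artanh_real[of y] \<open>y < 1\<close> by (simp add: y_def)
    then show False using assms(4) unfolding hyp_dist_def y_def by simp
  qed
  then have "(tanh \<epsilon>)\<^sup>2 \<le> y\<^sup>2" using assms(3) by (intro power_mono) auto
  then show ?thesis unfolding k by simp
qed

lemma borel_measurable_invariant_kernel [measurable]:
  "(\<lambda>w. invariant_kernel z w) \<in> borel_measurable borel"
proof -
  have [measurable]: "(\<lambda>w. cinner z w) \<in> borel_measurable borel"
    unfolding cinner_def by (intro borel_measurable_continuous_onI continuous_intros)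
  show ?thesis unfolding invariant_kernel_def by measurable
qed

section \<open>The integral outside the neighbourhood\<close>

lemma nn_set_integral_finite_of_integrable_weight:
  fixes k h :: "'a \<Rightarrow> real"
  assumes "integrable M (\<lambda>x. indicator A x * (k x * h x))"
    and "\<forall>x\<in>A. 0 \<le> h x" "0 < L" "\<forall>x\<in>A. h x \<noteq> 0 \<longrightarrow> L \<le> k x"
  shows "(\<integral>\<^sup>+x\<in>A. ennreal (h x) \<partial>M) < \<infinity>"
proof -
  define g where "g = (\<lambda>x. indicator A x * (k x * h x))"
  have h_le: "h x \<le> 1 / L * g x" if "x \<in> A" for x
  proof (cases "h x = 0")
    case False
    then have "L * h x \<le> k x * h x" using that assms by (intro mult_right_mono) auto
    then show ?thesis using that \<open>0 < L\<close> by (simp add: g_def field_simps)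
  qed (use that assms in \<open>auto simp: g_def\<close>)
  have g_nonneg: "0 \<le> g x" for x
    using h_le[of x] assms by (cases "x \<in> A") (auto simp: g_def intro: order_trans)
  have "(\<integral>\<^sup>+x\<in>A. ennreal (h x) \<partial>M) \<le> (\<integral>\<^sup>+x. ennreal (1 / L) * ennreal (g x) \<partial>M)"
    using h_le \<open>0 < L\<close> g_nonneg
    by (intro nn_integral_mono) (auto simp: indicator_def ennreal_mult[symmetric] intro: ennreal_leI)
  also have "\<dots> = ennreal (1 / L) * ennreal (integral\<^sup>L M g)"
    using assms(1) g_nonneg unfolding g_def[symmetric]
    by (simp add: nn_integral_cmult nn_integral_eq_integral)
  also have "\<dots> < \<infinity>" by (simp add: ennreal_mult_less_top)
  finally show ?thesis .
qed

text \<open>If the weight integral is infinite, \<open>enn2real\<close> turns it into \<open>0\<close>; the bound survives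
  because \<open>k * h\<close> is then not integrable and its Bochner integral is \<open>0\<close> as well.\<close>
lemma set_integral_le_enn2real_weight:
  fixes k h :: "'a \<Rightarrow> real"
  assumes k_meas: "k \<in> borel_measurable M"
    and h_nonneg: "\<forall>x\<in>A. 0 \<le> h x" and "0 < L" "0 \<le> B"
    and k_bounds: "\<forall>x\<in>A. h x \<noteq> 0 \<longrightarrow> L \<le> k x \<and> k x \<le> B"
  shows "0 \<le> (LINT x:A|M. k x * h x)"
    and "(LINT x:A|M. k x * h x) \<le> B * enn2real (\<integral>\<^sup>+x\<in>A. ennreal (h x) \<partial>M)"
proof -
  define g where "g = (\<lambda>x. indicator A x * (k x * h x))"
  have int_eq: "(LINT x:A|M. k x * h x) = integral\<^sup>L M g"
    by (simp add: set_lebesgue_integral_def g_def)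
  have g_nonneg: "0 \<le> g x" for x
    using assms by (cases "x \<in> A"; cases "h x = 0") (auto simp: g_def)
  then show "0 \<le> (LINT x:A|M. k x * h x)"
    unfolding int_eq by (intro integral_nonneg_AE) auto
  show "(LINT x:A|M. k x * h x) \<le> B * enn2real (\<integral>\<^sup>+x\<in>A. ennreal (h x) \<partial>M)"
  proof (cases "integrable M g")
    case False
    then show ?thesis using \<open>0 \<le> B\<close> unfolding int_eq not_integrable_integral_eq[OF False] by simp
  next
    case True
    \<comment> \<open>This gives measurability of the weight; where \<open>h = 0\<close> it relies on \<open>x / 0 = 0\<close>.\<close>
    have h_eq: "ennreal (h x) * indicator A x = ennreal (g x / k x)" for x
      using assms by (cases "x \<in> A"; cases "h x = 0") (auto simp: g_def)
    have "ennreal (integral\<^sup>L M g) = (\<integral>\<^sup>+x. ennreal (g x) \<partial>M)"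
      using True g_nonneg by (simp add: nn_integral_eq_integral)
    also have "\<dots> \<le> (\<integral>\<^sup>+x. ennreal B * ennreal (g x / k x) \<partial>M)"
    proof (intro nn_integral_mono)
      fix x
      have "g x \<le> B * (g x / k x)" using assms g_nonneg[of x]
        by (cases "x \<in> A"; cases "h x = 0") (auto simp: g_def intro!: mult_right_mono)
      then show "ennreal (g x) \<le> ennreal B * ennreal (g x / k x)"
        using \<open>0 \<le> B\<close> by (metis ennreal_leI ennreal_mult')
    qed
    also have "\<dots> = ennreal B * (\<integral>\<^sup>+x\<in>A. ennreal (h x) \<partial>M)"
      unfolding h_eq using borel_measurable_integrable[OF True] k_meas by (simp add: nn_integral_cmult)
    also have "\<dots> = ennreal (B * enn2real (\<integral>\<^sup>+x\<in>A. ennreal (h x) \<partial>M))"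
      using nn_set_integral_finite_of_integrable_weight[of M A k h L] True assms \<open>0 \<le> B\<close>
      unfolding g_def by (simp add: ennreal_mult ennreal_enn2real_if)
    finally show ?thesis unfolding int_eq using \<open>0 \<le> B\<close> by (simp add: ennreal_le_iff)
  qed
qed

lemma sets_unit_ball [measurable]: "unit_ball \<in> sets borel"
  by (simp add: unit_ball_def)

lemma nn_integral_tau_measure_weight:
  "(\<integral>\<^sup>+z\<in>unit_ball. ennreal ((1 - (norm z)\<^sup>2) ^ (CARD('n) + 1)) \<partial>(tau_measure :: (complex^'n) measure)) = 1"
proof -
  define vol where "vol = measure lborel (unit_ball :: (complex^'n) set)"
  have vol_pos: "0 < vol" unfolding vol_def unit_ball_def by (rule content_ball_pos) simp
  have emeasure_ball: "emeasure lborel (unit_ball :: (complex^'n) set) = ennreal vol"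
    using emeasure_lborel_ball_finite[of "0 :: complex^'n" 1]
    unfolding vol_def unit_ball_def by (simp add: emeasure_eq_ennreal_measure)
  have weight: "ennreal (indicator unit_ball z / (vol * (1 - (norm z)\<^sup>2) ^ (CARD('n) + 1)))
      * (ennreal ((1 - (norm z)\<^sup>2) ^ (CARD('n) + 1)) * indicator unit_ball z)
      = ennreal (1 / vol) * indicator unit_ball z" for z :: "complex^'n"
  proof (cases "z \<in> unit_ball")
    case True
    then have "0 < 1 - (norm z)\<^sup>2"
      by (simp add: unit_ball_def abs_square_less_1)
    with True vol_pos show ?thesis by (simp add: ennreal_mult''[symmetric])
  qed simp
  have "(\<integral>\<^sup>+z\<in>unit_ball. ennreal ((1 - (norm z)\<^sup>2) ^ (CARD('n) + 1)) \<partial>(tau_measure :: (complex^'n) measure))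
      = (\<integral>\<^sup>+z. ennreal (1 / vol) * indicator unit_ball z \<partial>(lborel :: (complex^'n) measure))"
    unfolding tau_measure_def vol_def[symmetric] weight[symmetric]
    by (rule nn_integral_density) measurable
  also have "\<dots> = ennreal (1 / vol) * emeasure lborel (unit_ball :: (complex^'n) set)"
    by (rule nn_integral_cmult_indicator) simp
  also have "\<dots> = 1"
    using vol_pos by (simp add: emeasure_ball ennreal_mult''[symmetric])
  finally show ?thesis .
qed

lemma nn_integral_tau_measure_le:
  fixes F :: "complex^'n \<Rightarrow> ennreal"
  assumes "S \<subseteq> unit_ball" "0 \<le> C"
    and "\<forall>z\<in>S. F z \<le> ennreal (C * (1 - (norm z)\<^sup>2) ^ (CARD('n) + 1))"
  shows "(\<integral>\<^sup>+z\<in>S. F z \<partial>tau_measure) \<le> ennreal C"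
proof -
  have "(\<integral>\<^sup>+z\<in>S. F z \<partial>tau_measure)
      \<le> (\<integral>\<^sup>+z. ennreal C * (ennreal ((1 - (norm z)\<^sup>2) ^ (CARD('n) + 1)) * indicator unit_ball z)
            \<partial>(tau_measure :: (complex^'n) measure))"
    by (intro nn_integral_mono)
      (use assms in \<open>auto simp: indicator_def ennreal_mult[symmetric] unit_ball_def abs_square_le_1\<close>)
  also have "\<dots> = ennreal C * (\<integral>\<^sup>+z\<in>unit_ball. ennreal ((1 - (norm z)\<^sup>2) ^ (CARD('n) + 1))
      \<partial>(tau_measure :: (complex^'n) measure))"
    unfolding tau_measure_def by (rule nn_integral_cmult) measurable
  also have "\<dots> = ennreal C"
    unfolding nn_integral_tau_measure_weight by simp
  finally show ?thesis .
qed

lemma powr_le_powr_mult_powr: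
  fixes k d x m q :: real
  assumes "0 \<le> k" "k \<le> d" "k \<le> x" "0 \<le> m" "m \<le> q"
  shows "k powr q \<le> d powr (q - m) * x powr m"
proof -
  have "k powr q = k powr (q - m) * k powr m" by (simp add: powr_add[symmetric])
  also have "\<dots> \<le> d powr (q - m) * x powr m"
    using assms by (intro mult_mono powr_mono2) auto
  finally show ?thesis .
qed

lemma invariant_kernel_powr_bounds:
  fixes z w :: "complex^'n"
  assumes "norm z < 1" "norm w \<le> r" "r < 1" "invariant_kernel z w \<le> \<delta>" "0 \<le> m" "m \<le> q"
  shows "((1 - (norm z)\<^sup>2) * (1 - r\<^sup>2) / 4) powr q \<le> invariant_kernel z w powr q"
    and "invariant_kernel z w powr q \<le> \<delta> powr (q - m) * ((1 - (norm z)\<^sup>2) / (1 - r)\<^sup>2) powr m"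
proof -
  have "0 \<le> r" using assms(2) norm_ge_zero[of w] by linarith
  then have "0 \<le> (1 - (norm z)\<^sup>2) * (1 - r\<^sup>2) / 4"
    using assms(1,3) by (simp add: abs_square_less_1 less_imp_le)
  then show "((1 - (norm z)\<^sup>2) * (1 - r\<^sup>2) / 4) powr q \<le> invariant_kernel z w powr q"
    using invariant_kernel_ge_of_norm_le[of z w r] assms by (intro powr_mono2) auto
  show "invariant_kernel z w powr q \<le> \<delta> powr (q - m) * ((1 - (norm z)\<^sup>2) / (1 - r)\<^sup>2) powr m"
    using invariant_kernel_le_of_norm_le[of z w r] invariant_kernel_pos[of z w] assms
    by (intro powr_le_powr_mult_powr) auto
qed

lemma integral_invariant_kernel_powr_le:
  fixes \<Gamma> :: "(complex^'n) set" and \<sigma> :: "(complex^'n) measure" and a :: "complex^'n \<Rightarrow> real"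
    and r \<delta> p q :: real
  assumes sets: "sets \<sigma> = sets borel" and \<Gamma>: "\<Gamma> \<subseteq> unit_ball"
    and a_nonneg: "\<forall>w\<in>\<Gamma>. 0 \<le> a w" and supp: "\<forall>w\<in>\<Gamma>. a w \<noteq> 0 \<longrightarrow> norm w \<le> r"
    and r: "0 \<le> r" "r < 1" and z: "norm z < 1"
    and far: "\<forall>w\<in>\<Gamma>. invariant_kernel z w \<le> \<delta>"
    and p: "0 < p" and q: "(real CARD('n) + 1) / p \<le> q"
  defines "M \<equiv> enn2real (\<integral>\<^sup>+w\<in>\<Gamma>. ennreal (a w / (1 - (norm w)\<^sup>2) ^ (CARD('n) + 1)) \<partial>\<sigma>)"
  shows "(LINT w:\<Gamma>|\<sigma>. invariant_kernel z w powr q * a w / (1 - (norm w)\<^sup>2) ^ (CARD('n) + 1)) powr p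
    \<le> M powr p * \<delta> powr (p * q - (real CARD('n) + 1)) / (1 - r) ^ (2 * (CARD('n) + 1))
        * (1 - (norm z)\<^sup>2) ^ (CARD('n) + 1)"
proof -
  define n1 where "n1 = real CARD('n) + 1"
  define m where "m = n1 / p"
  define x where "x = (1 - (norm z)\<^sup>2) / (1 - r)\<^sup>2"
  define I where "I = (LINT w:\<Gamma>|\<sigma>. invariant_kernel z w powr q * (a w / (1 - (norm w)\<^sup>2) ^ (CARD('n) + 1)))"
  have m: "0 \<le> m" "m \<le> q" "p * m = n1" using p q unfolding m_def n1_def by auto
  have z2: "0 < 1 - (norm z)\<^sup>2" using z by (simp add: abs_square_less_1)
  have "0 < 1 - r\<^sup>2" using r by (simp add: abs_square_less_1)
  then have L_pos: "0 < ((1 - (norm z)\<^sup>2) * (1 - r\<^sup>2) / 4) powr q" using z2 by simp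
  have meas: "(\<lambda>w. invariant_kernel z w powr q) \<in> borel_measurable \<sigma>"
    unfolding measurable_cong_sets[OF sets refl] by measurable
  have h_nonneg: "\<forall>w\<in>\<Gamma>. 0 \<le> a w / (1 - (norm w)\<^sup>2) ^ (CARD('n) + 1)"
    using a_nonneg \<Gamma> by (auto simp: unit_ball_def abs_square_less_1 less_imp_le)
  have bounds: "\<forall>w\<in>\<Gamma>. a w / (1 - (norm w)\<^sup>2) ^ (CARD('n) + 1) \<noteq> 0 \<longrightarrow>
      ((1 - (norm z)\<^sup>2) * (1 - r\<^sup>2) / 4) powr q \<le> invariant_kernel z w powr q \<and>
      invariant_kernel z w powr q \<le> \<delta> powr (q - m) * x powr m"
    using supp far m z r(2) unfolding x_def by (auto intro: invariant_kernel_powr_bounds)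
  have "0 \<le> I" "I \<le> \<delta> powr (q - m) * x powr m * M"
    using set_integral_le_enn2real_weight[OF meas h_nonneg L_pos _ bounds] unfolding I_def M_def
    by simp_all
  then have "I powr p \<le> (\<delta> powr (q - m) * x powr m * M) powr p"
    using p by (intro powr_mono2) auto
  also have "\<dots> = \<delta> powr ((q - m) * p) * x powr (m * p) * M powr p"
    by (simp add: powr_mult powr_powr)
  also have "(q - m) * p = p * q - n1" using m by (simp add: algebra_simps)
  also have "m * p = n1" using m by (simp add: algebra_simps)
  also have "x powr n1 = (1 - (norm z)\<^sup>2) ^ (CARD('n) + 1) / (1 - r) ^ (2 * (CARD('n) + 1))"
  proof -
    have "0 < x" using z2 r unfolding x_def by simp
    moreover have "n1 = real (CARD('n) + 1)" unfolding n1_def by simp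
    ultimately have "x powr n1 = x ^ (CARD('n) + 1)" by (simp only: powr_realpow)
    then show ?thesis by (simp only: x_def power_divide power_mult)
  qed
  finally show ?thesis unfolding I_def n1_def times_divide_eq_right by (simp add: ac_simps)
qed

lemma support_in_smaller_ball:
  assumes "embedded_submanifold TYPE('m::finite) \<Gamma>" "smooth_compact_support TYPE('m) \<Gamma> a"
  obtains r where "0 \<le> r" "r < 1" "\<forall>w\<in>\<Gamma>. a w \<noteq> 0 \<longrightarrow> norm w \<le> r"
proof -
  obtain K where K: "compact K" "K \<subseteq> \<Gamma>" "\<forall>w\<in>\<Gamma> - K. a w = 0"
    using assms(2) by (auto simp: smooth_compact_support_def)
  have "K \<subseteq> unit_ball" using K(2) assms(1) by (auto simp: embedded_submanifold_def)
  show ?thesis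
  proof (cases "K = {}")
    case False
    obtain w0 where "w0 \<in> K" "\<forall>w\<in>K. norm w \<le> norm w0"
      using continuous_attains_sup[OF K(1) False continuous_on_norm_id] by blast
    with K(3) \<open>K \<subseteq> unit_ball\<close> show ?thesis by (intro that[of "norm w0"]) (auto simp: unit_ball_def)
  qed (use K(3) that[of 0] in auto)
qed

lemma nn_integral_outside_hyperbolic_neighbourhood_le:
  fixes \<Gamma> :: "(complex^'n) set" and \<sigma> :: "(complex^'n) measure" and a :: "complex^'n \<Rightarrow> real"
    and r \<epsilon> p q :: real
  assumes "sets \<sigma> = sets borel" "\<Gamma> \<subseteq> unit_ball"
    and "\<forall>w\<in>\<Gamma>. 0 \<le> a w" "\<forall>w\<in>\<Gamma>. a w \<noteq> 0 \<longrightarrow> norm w \<le> r" "0 \<le> r" "r < 1"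
    and "0 \<le> \<epsilon>" "0 < p" "(real CARD('n) + 1) / p \<le> q"
  defines "M \<equiv> enn2real (\<integral>\<^sup>+w\<in>\<Gamma>. ennreal (a w / (1 - (norm w)\<^sup>2) ^ (CARD('n) + 1)) \<partial>\<sigma>)"
    and "V \<equiv> {z\<in>unit_ball. \<exists>w\<in>\<Gamma>. hyp_dist z w < \<epsilon>}"
  shows "(\<integral>\<^sup>+z\<in>unit_ball - V. ennreal ((LINT w:\<Gamma>|\<sigma>.
        invariant_kernel z w powr q * a w / (1 - (norm w)\<^sup>2) ^ (CARD('n) + 1)) powr p) \<partial>tau_measure)
    \<le> ennreal (M powr p * (1 - (tanh \<epsilon>)\<^sup>2) powr (p * q - (real CARD('n) + 1))
        / (1 - r) ^ (2 * (CARD('n) + 1)))"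
proof (intro nn_integral_tau_measure_le ballI, goal_cases)
  case 2
  show ?case using \<open>r < 1\<close> by (intro divide_nonneg_nonneg mult_nonneg_nonneg) auto
next
  case (3 z)
  then have "norm z < 1" by (simp add: unit_ball_def)
  moreover have "\<forall>w\<in>\<Gamma>. invariant_kernel z w \<le> 1 - (tanh \<epsilon>)\<^sup>2"
    using 3 assms(2,7) invariant_kernel_le_of_hyp_dist[OF \<open>norm z < 1\<close>]
    by (auto simp: V_def unit_ball_def not_less)
  ultimately show ?case
    unfolding M_def using assms by (intro ennreal_leI integral_invariant_kernel_powr_le) auto
qed (simp add: V_def)

section \<open>Polynomial growth of \<open>c_alpha\<close>\<close>

lemma c_alpha_eq_pochhammer:
  assumes "-1 < \<alpha>"
  shows "c_alpha TYPE('n::finite) \<alpha> = pochhammer (\<alpha> + 1) CARD('n) / fact CARD('n)"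
proof -
  have "\<alpha> + 1 \<notin> \<int>\<^sub>\<le>\<^sub>0" using assms by (auto elim!: nonpos_Ints_cases)
  then show ?thesis unfolding c_alpha_def by (simp add: pochhammer_Gamma add_ac)
qed

lemma c_alpha_nonneg_le_power:
  assumes "-1 < \<alpha>"
  shows "0 \<le> c_alpha TYPE('n::finite) \<alpha>" and "c_alpha TYPE('n) \<alpha> \<le> (\<alpha> + CARD('n)) ^ CARD('n)"
proof -
  have "0 \<le> pochhammer (\<alpha> + 1) CARD('n)" using assms by (intro pochhammer_nonneg) simp
  then show "0 \<le> c_alpha TYPE('n) \<alpha>" using c_alpha_eq_pochhammer[OF assms, where 'n='n] by simp
  have "pochhammer (\<alpha> + 1) CARD('n) = (\<Prod>i<CARD('n). \<alpha> + 1 + real i)"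
    by (simp add: pochhammer_prod atLeast0LessThan)
  also have "\<dots> \<le> (\<Prod>i<CARD('n). \<alpha> + CARD('n))"
    using assms by (intro prod_mono) auto
  finally have "pochhammer (\<alpha> + 1) CARD('n) \<le> (\<alpha> + CARD('n)) ^ CARD('n)" by simp
  moreover have "pochhammer (\<alpha> + 1) CARD('n) / fact CARD('n) \<le> pochhammer (\<alpha> + 1) CARD('n)"
    using \<open>0 \<le> pochhammer (\<alpha> + 1) CARD('n)\<close> by (simp add: divide_le_eq mult_le_cancel_left1)
  ultimately show "c_alpha TYPE('n) \<alpha> \<le> (\<alpha> + CARD('n)) ^ CARD('n)"
    using c_alpha_eq_pochhammer[OF assms, where 'n='n] by simp
qed

lemma c_alpha_powr_le:
  fixes \<alpha> s :: real
  assumes "0 < \<alpha>" "0 \<le> s"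
  shows "c_alpha TYPE('n::finite) \<alpha> powr s \<le> (\<alpha> + CARD('n)) powr (CARD('n) * s)"
proof -
  have "-1 < \<alpha>" using assms by simp
  from c_alpha_nonneg_le_power[OF this, where 'n='n]
  have "c_alpha TYPE('n) \<alpha> powr s \<le> ((\<alpha> + CARD('n)) ^ CARD('n)) powr s"
    using assms by (intro powr_mono2) auto
  also have "\<dots> = (\<alpha> + CARD('n)) powr (CARD('n) * s)"
    using assms by (simp add: powr_realpow[symmetric] powr_powr)
  finally show ?thesis .
qed

lemma eventually_powr_mult_geometric_le:
  fixes d A b N :: real
  assumes "0 < d" "d < 1"
  shows "eventually (\<lambda>x. (x + A) powr b * d powr x \<le> x powr (- N)) at_top"
proof -
  define l where "l = - ln d"
  have "0 < l" using assms by (simp add: l_def)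
  then have "((\<lambda>x. (x + A) powr b * x powr N * exp (- l * x)) \<longlongrightarrow> 0) at_top"
    by real_asymp
  then have "eventually (\<lambda>x. (x + A) powr b * x powr N * exp (- l * x) < 1) at_top"
    by (rule order_tendstoD) simp
  then show ?thesis using eventually_gt_at_top[of 0]
  proof eventually_elim
    case (elim x)
    have "d powr x = exp (- l * x)" using assms by (simp add: l_def powr_def)
    then have "(x + A) powr b * d powr x = ((x + A) powr b * x powr N * exp (- l * x)) * x powr (- N)"
      using elim by (simp add: powr_minus field_simps)
    also have "\<dots> \<le> x powr (- N)" using elim by (intro mult_left_le_one_le) auto
    finally show ?case .
  qed
qed

lemma c_alpha_powr_mult_geometric_decay:
  fixes F :: "real \<Rightarrow> ennreal" and d s K \<beta> N :: real
  assumes "0 < d" "d < 1" "0 \<le> s" "0 \<le> K" and F: "\<forall>\<alpha>\<ge>\<beta>. F \<alpha> \<le> ennreal (K * d powr \<alpha>)"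
  shows "\<exists>C \<alpha>0. \<forall>\<alpha>\<ge>\<alpha>0. ennreal (c_alpha TYPE('n::finite) \<alpha> powr s) * F \<alpha> \<le> ennreal (C * \<alpha> powr (- N))"
proof -
  have "eventually (\<lambda>\<alpha>::real. (\<alpha> + CARD('n)) powr (CARD('n) * s) * d powr \<alpha> \<le> \<alpha> powr (- N)
      \<and> max \<beta> 1 \<le> \<alpha>) at_top"
    using eventually_powr_mult_geometric_le[OF assms(1,2)] eventually_ge_at_top by (rule eventually_conj)
  then obtain \<alpha>0 where \<alpha>0: "\<And>\<alpha>::real. \<alpha>0 \<le> \<alpha> \<Longrightarrow>
      (\<alpha> + CARD('n)) powr (CARD('n) * s) * d powr \<alpha> \<le> \<alpha> powr (- N) \<and> max \<beta> 1 \<le> \<alpha>"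
    by (auto simp: eventually_at_top_linorder)
  have "ennreal (c_alpha TYPE('n) \<alpha> powr s) * F \<alpha> \<le> ennreal (K * \<alpha> powr (- N))" if "\<alpha>0 \<le> \<alpha>" for \<alpha>
  proof -
    have \<alpha>: "(\<alpha> + CARD('n)) powr (CARD('n) * s) * d powr \<alpha> \<le> \<alpha> powr (- N)" "\<beta> \<le> \<alpha>" "0 < \<alpha>"
      using \<alpha>0[OF that] by auto
    have "ennreal (c_alpha TYPE('n) \<alpha> powr s) * F \<alpha> \<le> ennreal (c_alpha TYPE('n) \<alpha> powr s) * ennreal (K * d powr \<alpha>)"
      using F \<alpha>(2) by (intro mult_left_mono) auto
    also have "\<dots> = ennreal (c_alpha TYPE('n) \<alpha> powr s * d powr \<alpha> * K)"
      using assms by (simp add: ennreal_mult[symmetric] mult_ac)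
    also have "\<dots> \<le> ennreal ((\<alpha> + CARD('n)) powr (CARD('n) * s) * d powr \<alpha> * K)"
      using c_alpha_powr_le[OF \<alpha>(3) assms(3), where 'n='n] assms
      by (intro ennreal_leI mult_right_mono) auto
    also have "\<dots> \<le> ennreal (K * \<alpha> powr (- N))"
      using \<alpha>(1) assms by (intro ennreal_leI) (simp add: mult.commute mult_left_mono)
    finally show ?thesis .
  qed
  then show ?thesis by blast
qed

theorem mainTheorem14:
  fixes \<Gamma> :: "(complex^'n) set" and \<sigma> :: "(complex^'n) measure"
    and a :: "complex^'n \<Rightarrow> real" and p \<epsilon> :: real
  assumes "embedded_submanifold TYPE('m::finite) \<Gamma>"
    and "riemannian_volume TYPE('m) \<Gamma> \<sigma>"
    and "smooth_compact_support TYPE('m) \<Gamma> a"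
    and "\<forall>w\<in>\<Gamma>. a w \<ge> 0"
    and "0 < p" "p < 1" "0 < \<epsilon>"
  defines "V \<equiv> {z\<in>unit_ball. \<exists>w\<in>\<Gamma>. hyp_dist z w < \<epsilon>}"
  shows "\<forall>N>0. \<exists>C \<alpha>0. \<forall>\<alpha>\<ge>\<alpha>0.
    ennreal (c_alpha TYPE('n) \<alpha> powr (1 + p)) *
      (\<integral>\<^sup>+ z\<in>(unit_ball - V).
         ennreal ((LINT w:\<Gamma>|\<sigma>.
            (((1 - (norm z)\<^sup>2) * (1 - (norm w)\<^sup>2) / (cmod (1 - cinner z w))\<^sup>2)
               powr (real CARD('n) + 1 + \<alpha>))
            * a w / (1 - (norm w)\<^sup>2) ^ (CARD('n) + 1)) powr p) \<partial>tau_measure)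
    \<le> ennreal (C * \<alpha> powr (- N))"
proof -
  define \<delta> where "\<delta> = 1 - (tanh \<epsilon>)\<^sup>2"
  define M where "M = enn2real (\<integral>\<^sup>+w\<in>\<Gamma>. ennreal (a w / (1 - (norm w)\<^sup>2) ^ (CARD('n) + 1)) \<partial>\<sigma>)"
  have \<Gamma>: "\<Gamma> \<subseteq> unit_ball" using assms(1) by (simp add: embedded_submanifold_def)
  have sets: "sets \<sigma> = sets borel" using assms(2) by (simp add: riemannian_volume_def)
  obtain r where r: "\<forall>w\<in>\<Gamma>. a w \<noteq> 0 \<longrightarrow> norm w \<le> r" "0 \<le> r" "r < 1"
    using support_in_smaller_ball[OF assms(1,3)] by blast
  define C where "C = M powr p * \<delta> powr ((p - 1) * (real CARD('n) + 1)) / (1 - r) ^ (2 * (CARD('n) + 1))"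
  have "0 < \<delta>" "\<delta> < 1"
    using assms(7) tanh_real_lt_1[of \<epsilon>] unfolding \<delta>_def by (simp_all add: power_less_one_iff)
  show ?thesis
  proof (intro allI impI c_alpha_powr_mult_geometric_decay[where d = "\<delta> powr p" and K = C
        and \<beta> = "(real CARD('n) + 1) / p"], goal_cases)
    case (5 N \<alpha>)
    then have q: "(real CARD('n) + 1) / p \<le> real CARD('n) + 1 + \<alpha>" by simp
    have "p * (real CARD('n) + 1 + \<alpha>) - (real CARD('n) + 1) = (p - 1) * (real CARD('n) + 1) + p * \<alpha>"
      by algebra
    then have rhs: "M powr p * \<delta> powr (p * (real CARD('n) + 1 + \<alpha>) - (real CARD('n) + 1))
        / (1 - r) ^ (2 * (CARD('n) + 1)) = C * (\<delta> powr p) powr \<alpha>"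
      unfolding C_def by (simp add: powr_add powr_powr mult_ac)
    show ?case
      using nn_integral_outside_hyperbolic_neighbourhood_le[OF sets \<Gamma> assms(4) r
          less_imp_le[OF assms(7)] assms(5) q]
      unfolding V_def M_def[symmetric] \<delta>_def[symmetric] invariant_kernel_def rhs by simp
  qed (use \<open>0 < \<delta>\<close> \<open>\<delta> < 1\<close> assms(5) r(3) powr_less_mono2[of p \<delta> 1] in \<open>auto simp: C_def\<close>)
qed

end
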